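(* Let $\mathbf B_1\subset\mathbb R^n$ be the closed ball with centre $0$ and radius $1$, and let $U\subset\mathbb R^n$ be open with $\mathbf B_1\subset U$. Then for every $\varepsilon>0$ and every compact set $F\subset\operatorname{Int}\mathbf B_1$, the map $\operatorname{res}_{F,U}\circ\mathcal R_\varepsilon$ is a bounded linear operator $\Omega^k_p(U)\to\Omega^k_\infty(F)$.
   Context: Fix $1\le p<\infty$. $\Omega^k_p(U)$ denotes the closure of the smooth $k$-forms on $U$ with respect to the $L_p$-norm $\|\omega\|_p=(\int_U|\omega|^p\,dx)^{1/p}$. $\Omega^k_\infty(F)$ denotes the space of essentially bounded $k$-forms on $F$ with the norm $\operatorname{ess\,sup}_F|\omega|$. $\operatorname{res}_{F,U}$ is restriction of forms from $U$ to $F$. Construction of $\mathcal R_\varepsilon$: let $f\colon\mathbb R^n\to\mathbb R$ be smooth, with $\operatorname{supp}f\subset\mathbf B_1$, $f\ge0$, $f(v)=f(-v)$, $\int_{\mathbb R^n}f=1$, and put $\tau(v)=f(v)\,dv^0\cdots dv^{n-1}$. Let $h$ be a diffeomorphism of $\mathbb R^n$ onto the open unit ball. For $v\in\mathbb R^n$ let $s_v(x)=x+v$ and define $\mathfrak s_v\colon U\to U$ by $\mathfrak s_v(x)=h s_v h^{-1}(x)$ for $x$ in the open unit ball and $\mathfrak s_v(x)=x$ otherwise. Then $(\mathcal R_\varepsilon\omega)(x)=\int_{\mathbb R^n}(\mathfrak s^*_{\varepsilon v}\omega)(x)\,\tau(v)$. *)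

theory Defs
  imports "HOL-Analysis.Analysis"
begin

coinductive smooth_on :: "'a::euclidean_space set \<Rightarrow> ('a \<Rightarrow> 'b::real_normed_vector) \<Rightarrow> bool" where
  "\<lbrakk>\<forall>x\<in>S. f differentiable (at x);
    \<forall>i\<in>Basis. smooth_on S (\<lambda>x. frechet_derivative f (at x) i)\<rbrakk> \<Longrightarrow> smooth_on S f"

definition kcovector :: "nat \<Rightarrow> ('a::euclidean_space list \<Rightarrow> real) \<Rightarrow> bool" where
  "kcovector k \<alpha> \<longleftrightarrow>
     (\<forall>vs. length vs \<noteq> k \<longrightarrow> \<alpha> vs = 0) \<and>
     (\<forall>vs i. length vs = k \<longrightarrow> i < k \<longrightarrow> linear (\<lambda>v. \<alpha> (vs[i := v]))) \<and>
     (\<forall>vs i j. length vs = k \<longrightarrow> i < j \<longrightarrow> j < k \<longrightarrow> vs ! i = vs ! j \<longrightarrow> \<alpha> vs = 0)"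

text \<open>Pointwise (Euclidean) norm of a k-covector: square root of the sum of squares of its
  coefficients with respect to the standard basis, i.e. sum over increasing multi-indices I of
  alpha(e_I)^2.  Summing over all lists of basis vectors counts each I exactly k! times
  (lists with repetitions contribute 0).\<close>
definition form_norm :: "nat \<Rightarrow> ('a::euclidean_space list \<Rightarrow> real) \<Rightarrow> real" where
  "form_norm k \<alpha> =
     sqrt ((\<Sum>bs\<in>{bs. set bs \<subseteq> Basis \<and> length bs = k}. (\<alpha> bs)\<^sup>2) / fact k)"

definition is_kform_on :: "'a::euclidean_space set \<Rightarrow> nat \<Rightarrow> ('a \<Rightarrow> 'a list \<Rightarrow> real) \<Rightarrow> bool" where
  "is_kform_on S k \<omega> \<longleftrightarrow> (\<forall>x\<in>S. kcovector k (\<omega> x))"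

definition smooth_kform_on :: "'a::euclidean_space set \<Rightarrow> nat \<Rightarrow> ('a \<Rightarrow> 'a list \<Rightarrow> real) \<Rightarrow> bool" where
  "smooth_kform_on U k \<omega> \<longleftrightarrow> is_kform_on U k \<omega> \<and> (\<forall>vs. smooth_on U (\<lambda>x. \<omega> x vs))"

definition Lp_pow :: "real \<Rightarrow> nat \<Rightarrow> 'a::euclidean_space set \<Rightarrow> ('a \<Rightarrow> 'a list \<Rightarrow> real) \<Rightarrow> ennreal" where
  "Lp_pow p k U \<omega> = set_nn_integral lebesgue U (\<lambda>x. ennreal (form_norm k (\<omega> x) powr p))"

definition Lp_norm :: "real \<Rightarrow> nat \<Rightarrow> 'a::euclidean_space set \<Rightarrow> ('a \<Rightarrow> 'a list \<Rightarrow> real) \<Rightarrow> real" where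
  "Lp_norm p k U \<omega> = enn2real (Lp_pow p k U \<omega>) powr (1 / p)"

definition Omega_p :: "nat \<Rightarrow> real \<Rightarrow> 'a::euclidean_space set \<Rightarrow> ('a \<Rightarrow> 'a list \<Rightarrow> real) \<Rightarrow> bool" where
  "Omega_p k p U \<omega> \<longleftrightarrow>
     is_kform_on U k \<omega> \<and>
     (\<forall>vs. (\<lambda>x. \<omega> x vs) \<in> borel_measurable (lebesgue_on U)) \<and>
     Lp_pow p k U \<omega> < \<infinity> \<and>
     (\<exists>\<phi>. (\<forall>j. smooth_kform_on U k (\<phi> j)) \<and>
          (\<lambda>j. Lp_pow p k U (\<lambda>x vs. \<phi> j x vs - \<omega> x vs)) \<longlonglongrightarrow> 0)"

definition Omega_inf :: "nat \<Rightarrow> 'a::euclidean_space set \<Rightarrow> ('a \<Rightarrow> 'a list \<Rightarrow> real) \<Rightarrow> bool" where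
  "Omega_inf k F \<omega> \<longleftrightarrow>
     is_kform_on F k \<omega> \<and>
     (\<forall>vs. (\<lambda>x. \<omega> x vs) \<in> borel_measurable (lebesgue_on F)) \<and>
     (\<exists>M. AE x in lebesgue_on F. form_norm k (\<omega> x) \<le> M)"

definition pullback :: "('a::euclidean_space \<Rightarrow> 'a) \<Rightarrow> ('a \<Rightarrow> 'a list \<Rightarrow> real) \<Rightarrow> 'a \<Rightarrow> 'a list \<Rightarrow> real" where
  "pullback \<phi> \<omega> x vs = \<omega> (\<phi> x) (map (frechet_derivative \<phi> (at x)) vs)"

definition sfrak :: "('a::euclidean_space \<Rightarrow> 'a) \<Rightarrow> 'a \<Rightarrow> 'a \<Rightarrow> 'a" where
  "sfrak h v x = (if x \<in> ball 0 1 then h (inv h x + v) else x)"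

definition R_eps :: "('a::euclidean_space \<Rightarrow> 'a) \<Rightarrow> ('a \<Rightarrow> real) \<Rightarrow> real \<Rightarrow>
    ('a \<Rightarrow> 'a list \<Rightarrow> real) \<Rightarrow> 'a \<Rightarrow> 'a list \<Rightarrow> real" where
  "R_eps h f \<epsilon> \<omega> x vs = (LINT v|lebesgue. pullback (sfrak h (\<epsilon> *\<^sub>R v)) \<omega> x vs * f v)"

end

theory Submission
  imports Defs
begin

text \<open>For x in the open unit ball, the pullback (s_{\<epsilon>v}^* \<omega>)(x) is \<omega> at
  y = h(h^{-1} x + \<epsilon> v), applied to vectors moved by a linear map that depends continuously
  on (x, v). Expanding \<omega> in the standard coframe and substituting v = (h^{-1} y - h^{-1} x) / \<epsilon>
  writes each coefficient of R_\<epsilon> \<omega> at x \<in> F as a finite sum of integrals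
  \<integral>_K k(x, y) \<omega>_I(y) dy over one compact set K inside the unit ball, with kernels k
  continuous on F \<times> K. Hence R_\<epsilon> \<omega> is continuous on F and bounded by a multiple of
  \<integral>_K |\<omega>|, which is at most (|K| + 1) \<parallel>\<omega>\<parallel>_p because K has finite measure.\<close>

section \<open>Coordinates and change of variables\<close>

typedef (overloaded) ('a::euclidean_space) basis_index = "Basis :: 'a set"
  morphisms basis_vec Abs_basis_index
  using nonempty_Basis by blast

lemma inj_basis_vec: "inj basis_vec"
  by (meson basis_vec_inject injI)

lemma range_basis_vec: "range basis_vec = (Basis :: 'a::euclidean_space set)"
  using type_definition.Rep_range[OF type_definition_basis_index] by simp

lemma basis_vec_in_Basis: "basis_vec i \<in> Basis"
  using basis_vec by blast

lemma ball_Basis_iff_basis_vec: "(\<forall>b\<in>(Basis::'a::euclidean_space set). P b) \<longleftrightarrow> (\<forall>i. P (basis_vec i))"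
  by (metis basis_vec_in_Basis imageE range_basis_vec)

lemma prod_Basis_basis_vec: "(\<Prod>b\<in>(Basis::'a::euclidean_space set). g b) = (\<Prod>i\<in>UNIV. g (basis_vec i))"
  using prod.reindex[OF inj_on_subset[OF inj_basis_vec subset_UNIV], of g UNIV]
  by (simp add: range_basis_vec)

lemma sum_Basis_basis_vec: "(\<Sum>b\<in>(Basis::'a::euclidean_space set). g b) = (\<Sum>i\<in>UNIV. g (basis_vec i))"
  using sum.reindex[OF inj_on_subset[OF inj_basis_vec subset_UNIV], of g UNIV]
  by (simp add: range_basis_vec)

instance basis_index :: (euclidean_space) finite
proof
  have "(UNIV :: 'a basis_index set) = Abs_basis_index ` Basis"
    by (metis Abs_basis_index_cases UNIV_eq_I imageI)
  then show "finite (UNIV :: 'a basis_index set)" by (metis finite_Basis finite_imageI)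
qed

text \<open>The change of variables theorem of the library is stated for \<open>real^'n\<close> with
  \<open>'n::{finite,wellorder}\<close>; any injection into \<^typ>\<open>nat\<close> provides the order.\<close>

definition basis_index_code :: "'a::euclidean_space basis_index \<Rightarrow> nat" where
  "basis_index_code = (SOME g. inj g)"

lemma inj_basis_index_code: "inj basis_index_code"
proof -
  have "countable (UNIV :: 'a basis_index set)" by (simp add: countable_finite)
  then obtain g :: "'a basis_index \<Rightarrow> nat" where "inj g" unfolding countable_def by blast
  then show ?thesis unfolding basis_index_code_def by (metis someI_ex)
qed

instantiation basis_index :: (euclidean_space) linorder
begin
definition less_eq_basis_index :: "'a basis_index \<Rightarrow> 'a basis_index \<Rightarrow> bool" where
  "less_eq_basis_index i j \<longleftrightarrow> basis_index_code i \<le> basis_index_code j"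
definition less_basis_index :: "'a basis_index \<Rightarrow> 'a basis_index \<Rightarrow> bool" where
  "less_basis_index i j \<longleftrightarrow> basis_index_code i < basis_index_code j"
instance
  by standard (auto simp: less_eq_basis_index_def less_basis_index_def
      inj_eq[OF inj_basis_index_code] intro: injD[OF inj_basis_index_code])
end

instance basis_index :: (euclidean_space) wellorder
proof
  fix P :: "'a basis_index \<Rightarrow> bool" and a
  assume step: "\<And>i. (\<And>j. j < i \<Longrightarrow> P j) \<Longrightarrow> P i"
  show "P a"
    by (induct a rule: measure_induct_rule[where f=basis_index_code])
      (rule step, simp add: less_basis_index_def)
qed

definition coords :: "'a::euclidean_space \<Rightarrow> real^('a basis_index)" where
  "coords x = (\<chi> i. x \<bullet> basis_vec i)"

definition from_coords :: "real^('a::euclidean_space basis_index) \<Rightarrow> 'a" where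
  "from_coords z = (\<Sum>i\<in>UNIV. z $ i *\<^sub>R basis_vec i)"

lemma coords_nth: "coords x $ i = x \<bullet> basis_vec i"
  by (simp add: coords_def)

lemma from_coords_coords [simp]: "from_coords (coords x) = x"
  using sum_Basis_basis_vec[of "\<lambda>b. (x \<bullet> b) *\<^sub>R b"]
  by (simp add: from_coords_def coords_def euclidean_representation)

lemma inner_from_coords: "from_coords z \<bullet> basis_vec j = z $ j"
proof -
  have "from_coords z \<bullet> basis_vec j = (\<Sum>i\<in>UNIV. if i = j then z $ i else 0)"
    unfolding from_coords_def inner_sum_left
    by (rule sum.cong) (auto simp: inner_Basis basis_vec_in_Basis inj_eq[OF inj_basis_vec])
  then show ?thesis by simp
qed

lemma coords_from_coords [simp]: "coords (from_coords z) = z"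
  by (simp add: coords_def inner_from_coords vec_eq_iff)

lemma linear_coords: "linear coords"
  by (rule linearI) (auto simp: coords_def vec_eq_iff inner_add_left)

lemma linear_from_coords: "linear from_coords"
  by (rule linearI) (auto simp: from_coords_def sum.distrib scaleR_add_left scaleR_sum_right)

lemma from_coords_axis: "from_coords (axis j 1) = basis_vec j"
proof -
  have "(\<lambda>i. axis j (1::real) $ i *\<^sub>R basis_vec i) = (\<lambda>i. if i = j then basis_vec i else 0)"
    by (auto simp: axis_def fun_eq_iff)
  then show ?thesis unfolding from_coords_def by (simp only:) simp
qed

lemma coords_borel [measurable]: "coords \<in> borel_measurable borel"
  by (intro borel_measurable_continuous_onI linear_continuous_on)
    (simp add: linear_coords flip: linear_conv_bounded_linear)

lemma from_coords_borel [measurable]: "from_coords \<in> borel_measurable borel"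
  by (intro borel_measurable_continuous_onI linear_continuous_on)
    (simp add: linear_from_coords flip: linear_conv_bounded_linear)

lemma vimage_coords_box: "coords -` box l u = box (from_coords l) (from_coords u)"
proof -
  have "x \<in> box (from_coords l) (from_coords u) \<longleftrightarrow>
      (\<forall>i. l $ i < x \<bullet> basis_vec i \<and> x \<bullet> basis_vec i < u $ i)" for x
    unfolding mem_box ball_Basis_iff_basis_vec by (simp add: inner_from_coords)
  then show ?thesis by (auto simp: mem_box_cart coords_nth)
qed

lemma prod_Basis_cart: "(\<Prod>b\<in>(Basis :: (real^'n) set). g b) = (\<Prod>i\<in>UNIV. g (axis i 1))"
proof -
  have "inj (\<lambda>i::'n. axis i (1::real))" by (rule injI) (simp add: axis_eq_axis)
  moreover have "(Basis :: (real^'n) set) = range (\<lambda>i. axis i 1)"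
    by (auto simp: Basis_vec_def)
  ultimately show ?thesis
    using prod.reindex[of "\<lambda>i::'n. axis i (1::real)" UNIV g] by simp
qed

lemma distr_lborel_coords: "distr (lborel :: 'a::euclidean_space measure) borel coords = lborel"
proof (rule lborel_eqI[symmetric])
  fix l u :: "real^('a basis_index)"
  assume le_Basis: "\<And>b. b \<in> Basis \<Longrightarrow> l \<bullet> b \<le> u \<bullet> b"
  have le: "l $ i \<le> u $ i" for i
    using le_Basis[of "axis i 1"] by (auto simp: cart_eq_inner_axis Basis_vec_def)
  have "emeasure (distr lborel borel coords) (box l u)
      = emeasure lborel (box (from_coords l) (from_coords u) :: 'a set)"
    by (simp add: emeasure_distr vimage_coords_box)
  also have "\<dots> = (\<Prod>b\<in>(Basis::'a set). (from_coords u - from_coords l) \<bullet> b)"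
    using le by (subst emeasure_lborel_box_eq)
      (auto simp: inner_diff_left ball_Basis_iff_basis_vec inner_from_coords)
  also have "\<dots> = (\<Prod>i\<in>UNIV. u $ i - l $ i)"
    unfolding prod_Basis_basis_vec by (simp add: inner_diff_left inner_from_coords)
  also have "\<dots> = (\<Prod>b\<in>Basis. (u - l) \<bullet> b)"
    by (simp add: prod_Basis_cart inner_diff_left cart_eq_inner_axis)
  finally show "emeasure (distr lborel borel coords) (box l u) = (\<Prod>b\<in>Basis. (u - l) \<bullet> b)" .
qed simp

lemma distr_lborel_from_coords:
  "distr (lborel :: (real^('a::euclidean_space basis_index)) measure) borel from_coords = lborel"
proof -
  have "distr (distr (lborel :: 'a measure) borel coords) borel from_coords = lborel"
    by (subst distr_distr) (simp_all add: o_def distr_id2)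
  then show ?thesis by (simp add: distr_lborel_coords)
qed

lemma lborel_preserving_imp_lebesgue_preserving:
  fixes T :: "'a::euclidean_space \<Rightarrow> 'b::euclidean_space"
  assumes T_borel [measurable]: "T \<in> borel \<rightarrow>\<^sub>M borel"
    and T_distr: "distr lborel borel T = lborel"
  shows "T \<in> lebesgue \<rightarrow>\<^sub>M lebesgue" "distr lebesgue lebesgue T = lebesgue"
proof -
  have "emeasure lborel A = emeasure (distr lebesgue lborel T) A" if "A \<in> sets borel" for A
  proof -
    have "emeasure lborel A = emeasure (distr lborel borel T) A" by (simp add: T_distr)
    also have "\<dots> = emeasure (distr lebesgue lborel T) A"
      using that by (simp add: distr_completion cong: distr_cong)
    finally show ?thesis .
  qed
  then have null_eq: "null_sets lborel = null_sets (distr lebesgue lborel T)"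
    by (auto simp: null_sets_def)
  show "T \<in> lebesgue \<rightarrow>\<^sub>M lebesgue"
    by (simp add: completion.measurable_completion2 null_eq measurable_completion)
  have "lebesgue = completion (distr lborel borel T)" by (simp add: T_distr)
  also have "\<dots> = completion (distr lebesgue lborel T)"
    by (simp add: distr_completion cong: distr_cong)
  also have "\<dots> = distr lebesgue lebesgue T"
    by (subst completion.completion_distr_eq) (auto simp: null_eq measurable_completion)
  finally show "distr lebesgue lebesgue T = lebesgue" by simp
qed

lemmas coords_lebesgue =
  lborel_preserving_imp_lebesgue_preserving[OF coords_borel distr_lborel_coords]

lemmas from_coords_lebesgue =
  lborel_preserving_imp_lebesgue_preserving[OF from_coords_borel distr_lborel_from_coords]

lemma coords_image_eq: "coords ` A = from_coords -` A"
  by (auto simp: image_iff) (metis coords_from_coords)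

lemma sets_coords_image: "A \<in> sets lebesgue \<Longrightarrow> coords ` A \<in> sets lebesgue"
  unfolding coords_image_eq using measurable_sets[OF from_coords_lebesgue(1)] by simp

lemma integrable_from_coords_iff:
  fixes g :: "'a::euclidean_space \<Rightarrow> real"
  shows "integrable lebesgue (\<lambda>z. g (from_coords z)) \<longleftrightarrow> integrable lebesgue g"
proof
  assume "integrable lebesgue g"
  then show "integrable lebesgue (\<lambda>z. g (from_coords z))"
    using integrable_distr_eq[OF from_coords_lebesgue(1), of g]
    by (auto simp: from_coords_lebesgue(2))
next
  assume int: "integrable lebesgue (\<lambda>z. g (from_coords z))"
  then have "(\<lambda>z. g (from_coords z)) \<in> borel_measurable lebesgue" by auto
  with int show "integrable lebesgue g"
    using integrable_distr_eq[OF coords_lebesgue(1), of "\<lambda>z. g (from_coords z)"]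
    by (simp add: coords_lebesgue(2))
qed

lemma integral_from_coords:
  fixes g :: "'a::euclidean_space \<Rightarrow> real"
  shows "integral\<^sup>L lebesgue (\<lambda>z. g (from_coords z)) = integral\<^sup>L lebesgue g"
proof (cases "integrable lebesgue g")
  case True
  then show ?thesis
    using integral_distr[OF from_coords_lebesgue(1), of g] by (auto simp: from_coords_lebesgue(2))
next
  case False
  then show ?thesis using integrable_from_coords_iff[of g] by (simp add: not_integrable_integral_eq)
qed

lemma indicator_coords_image:
  "indicator (coords ` A) z = (indicator A (from_coords z) :: real)"
  by (simp add: coords_image_eq indicator_def)

lemma absolutely_integrable_on_from_coords_iff:
  fixes g :: "'a::euclidean_space \<Rightarrow> real"
  shows "(\<lambda>z. g (from_coords z)) absolutely_integrable_on (coords ` A) \<longleftrightarrow>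
    g absolutely_integrable_on A"
  unfolding set_integrable_def indicator_coords_image
  using integrable_from_coords_iff[of "\<lambda>x. indicator A x *\<^sub>R g x"] by simp

lemma integral_coords_image:
  fixes g :: "'a::euclidean_space \<Rightarrow> real"
  assumes "g absolutely_integrable_on A"
  shows "integral (coords ` A) (\<lambda>z. g (from_coords z)) = integral A g"
proof -
  have "integral (coords ` A) (\<lambda>z. g (from_coords z)) = (LINT z:coords ` A|lebesgue. g (from_coords z))"
    using assms by (simp add: set_lebesgue_integral_eq_integral absolutely_integrable_on_from_coords_iff)
  also have "\<dots> = (LINT x:A|lebesgue. g x)"
    unfolding set_lebesgue_integral_def indicator_coords_image
    using integral_from_coords[of "\<lambda>x. indicator A x *\<^sub>R g x"] by simp
  also have "\<dots> = integral A g"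
    using assms by (simp add: set_lebesgue_integral_eq_integral)
  finally show ?thesis .
qed

definition jacobian_det :: "('a::euclidean_space \<Rightarrow> 'a) \<Rightarrow> real" where
  "jacobian_det A = \<bar>det (matrix (\<lambda>z. coords (A (from_coords z))))\<bar>"

lemma jacobian_det_eq:
  "jacobian_det A = \<bar>\<Sum>\<pi>\<in>{\<pi>. \<pi> permutes (UNIV :: 'a::euclidean_space basis_index set)}.
     of_int (sign \<pi>) * (\<Prod>i\<in>UNIV. A (basis_vec (\<pi> i)) \<bullet> basis_vec i)\<bar>"
  by (simp add: jacobian_det_def det_def matrix_def from_coords_axis coords_nth)

lemma continuous_on_jacobian_det:
  fixes A :: "'b::topological_space \<Rightarrow> 'a::euclidean_space \<Rightarrow> 'a"
  assumes "\<And>b. b \<in> Basis \<Longrightarrow> continuous_on S (\<lambda>y. A y b)"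
  shows "continuous_on S (\<lambda>y. jacobian_det (A y))"
  unfolding jacobian_det_eq by (intro continuous_intros assms basis_vec_in_Basis)

theorem has_absolute_integral_change_of_variables_euclidean:
  fixes g :: "'a::euclidean_space \<Rightarrow> 'a" and u :: "'a \<Rightarrow> real"
  assumes S: "S \<in> sets lebesgue"
    and der_g: "\<And>x. x \<in> S \<Longrightarrow> (g has_derivative g' x) (at x within S)"
    and inj: "inj_on g S"
  shows "(\<lambda>x. jacobian_det (g' x) * u (g x)) absolutely_integrable_on S \<and>
      integral S (\<lambda>x. jacobian_det (g' x) * u (g x)) = b
    \<longleftrightarrow> u absolutely_integrable_on (g ` S) \<and> integral (g ` S) u = b"
proof -
  let ?S = "coords ` S"
  define gc where "gc = (\<lambda>z. coords (g (from_coords z)))"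
  define gc' where "gc' = (\<lambda>z w. coords (g' (from_coords z) (from_coords w)))"
  have from_coords_S: "from_coords ` ?S = S" by (force simp: image_iff)
  have der_gc: "(gc has_derivative gc' z) (at z within ?S)" if "z \<in> ?S" for z
  proof -
    have "(from_coords has_derivative from_coords) (at z within ?S)"
      by (simp add: bounded_linear_imp_has_derivative linear_from_coords flip: linear_conv_bounded_linear)
    moreover have "(g has_derivative g' (from_coords z)) (at (from_coords z) within from_coords ` ?S)"
      using der_g that from_coords_S by auto
    ultimately have "(g \<circ> from_coords has_derivative g' (from_coords z) \<circ> from_coords) (at z within ?S)"
      by (rule diff_chain_within)
    then have "((\<lambda>z. coords ((g \<circ> from_coords) z)) has_derivative
        (\<lambda>w. coords ((g' (from_coords z) \<circ> from_coords) w))) (at z within ?S)"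
      by (rule bounded_linear.has_derivative[rotated])
        (simp add: linear_coords flip: linear_conv_bounded_linear)
    then show ?thesis by (simp add: gc_def gc'_def o_def)
  qed
  have inj_gc: "inj_on gc ?S"
    using inj unfolding gc_def inj_on_def by (auto) (metis from_coords_coords)
  have gc_image: "gc ` ?S = coords ` (g ` S)"
    unfolding gc_def by (force simp: image_iff)
  have vec_iff: "(\<lambda>z. vec (v (from_coords z)) :: real^1) absolutely_integrable_on (coords ` A) \<and>
      integral (coords ` A) (\<lambda>z. vec (v (from_coords z)) :: real^1) = vec b
    \<longleftrightarrow> v absolutely_integrable_on A \<and> integral A v = b"
    for v :: "'a \<Rightarrow> real" and A
    using absolutely_integrable_on_from_coords_iff[where g=v and A=A] integral_coords_image[where g=v and A=A]
    by (auto simp: absolutely_integrable_on_1_iff integral_on_1_eq)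
  have jac_eq: "\<bar>det (matrix (gc' z))\<bar> *\<^sub>R vec (u (from_coords (gc z))) =
      (vec (jacobian_det (g' (from_coords z)) * u (g (from_coords z))) :: real^1)" for z
    by (simp add: gc_def gc'_def jacobian_det_def vec_eq_iff)
  let ?H = "\<lambda>x. jacobian_det (g' x) * u (g x)"
  have "?H absolutely_integrable_on S \<and> integral S ?H = b \<longleftrightarrow>
      (\<lambda>z. vec (?H (from_coords z)) :: real^1) absolutely_integrable_on ?S \<and>
      integral ?S (\<lambda>z. vec (?H (from_coords z)) :: real^1) = vec b"
    by (rule vec_iff[symmetric])
  also have "\<dots> \<longleftrightarrow> (\<lambda>y. vec (u (from_coords y)) :: real^1) absolutely_integrable_on gc ` ?S \<and>
      integral (gc ` ?S) (\<lambda>y. vec (u (from_coords y)) :: real^1) = vec b"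
    using has_absolute_integral_change_of_variables[OF sets_coords_image[OF S] der_gc inj_gc,
        of "\<lambda>y. vec (u (from_coords y)) :: real^1" "vec b"]
    by (simp add: jac_eq)
  also have "\<dots> \<longleftrightarrow> u absolutely_integrable_on (g ` S) \<and> integral (g ` S) u = b"
    unfolding gc_image by (rule vec_iff)
  finally show ?thesis .
qed

lemma smooth_on_differentiable: "smooth_on S f \<Longrightarrow> x \<in> S \<Longrightarrow> f differentiable (at x)"
  by (erule smooth_on.cases) auto

lemma smooth_on_partial_derivative:
  "smooth_on S f \<Longrightarrow> i \<in> Basis \<Longrightarrow> smooth_on S (\<lambda>x. frechet_derivative f (at x) i)"
  by (erule smooth_on.cases) auto

lemma smooth_on_imp_continuous_on: "smooth_on S f \<Longrightarrow> continuous_on S f"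
  by (meson continuous_at_imp_continuous_on differentiable_imp_continuous_within
      smooth_on_differentiable)

lemma smooth_on_has_derivative:
  "smooth_on S f \<Longrightarrow> x \<in> S \<Longrightarrow> (f has_derivative frechet_derivative f (at x)) (at x)"
  using frechet_derivative_works smooth_on_differentiable by blast

lemma frechet_derivative_eq_sum_Basis:
  assumes "f differentiable (at x)"
  shows "frechet_derivative f (at x) w = (\<Sum>b\<in>Basis. (w \<bullet> b) *\<^sub>R frechet_derivative f (at x) b)"
proof -
  have "linear (frechet_derivative f (at x))"
    using assms frechet_derivative_works has_derivative_linear by blast
  then have "frechet_derivative f (at x) (\<Sum>b\<in>Basis. (w \<bullet> b) *\<^sub>R b) =
      (\<Sum>b\<in>Basis. (w \<bullet> b) *\<^sub>R frechet_derivative f (at x) b)"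
    by (simp add: linear_sum linear_scale)
  then show ?thesis by (simp add: euclidean_representation)
qed

lemma continuous_on_frechet_derivative_compose:
  fixes f :: "'a::euclidean_space \<Rightarrow> 'b::real_normed_vector"
  assumes f: "smooth_on U f" and a: "continuous_on S a" "a ` S \<subseteq> U" and c: "continuous_on S c"
  shows "continuous_on S (\<lambda>q. frechet_derivative f (at (a q)) (c q))"
proof -
  have "continuous_on S (\<lambda>q. \<Sum>b\<in>Basis. (c q \<bullet> b) *\<^sub>R frechet_derivative f (at (a q)) b)"
  proof (intro continuous_intros c)
    fix b :: 'a assume "b \<in> Basis"
    then have "continuous_on U (\<lambda>x. frechet_derivative f (at x) b)"
      using f smooth_on_imp_continuous_on smooth_on_partial_derivative by blast
    then show "continuous_on S (\<lambda>q. frechet_derivative f (at (a q)) b)"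
      using continuous_on_compose2 a by blast
  qed
  moreover have "frechet_derivative f (at (a q)) (c q) =
      (\<Sum>b\<in>Basis. (c q \<bullet> b) *\<^sub>R frechet_derivative f (at (a q)) b)" if "q \<in> S" for q
    using that a f smooth_on_differentiable frechet_derivative_eq_sum_Basis by blast
  ultimately show ?thesis
    using continuous_on_cong by force
qed

section \<open>k-covectors\<close>

definition basis_lists :: "nat \<Rightarrow> 'a::euclidean_space list set" where
  "basis_lists k = {bs. set bs \<subseteq> Basis \<and> length bs = k}"

lemma finite_basis_lists: "finite (basis_lists k)"
  unfolding basis_lists_def by (rule finite_lists_length_eq) simp

lemma form_norm_eq_L2_set: "form_norm k \<alpha> = L2_set \<alpha> (basis_lists k) / sqrt (fact k)"
  by (simp add: form_norm_def basis_lists_def L2_set_def real_sqrt_divide)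

lemma form_norm_nonneg: "form_norm k \<alpha> \<ge> 0"
  by (simp add: form_norm_eq_L2_set)

lemma abs_le_form_norm:
  assumes "bs \<in> basis_lists k"
  shows "\<bar>\<alpha> bs\<bar> \<le> sqrt (fact k) * form_norm k \<alpha>"
  using member_le_L2_set[OF finite_basis_lists assms, of "\<lambda>bs. \<bar>\<alpha> bs\<bar>"]
  by (simp add: form_norm_eq_L2_set L2_set_def)

lemma form_norm_le_sum_abs: "form_norm k \<alpha> \<le> (\<Sum>bs\<in>basis_lists k. \<bar>\<alpha> bs\<bar>)"
proof -
  have "1 \<le> sqrt (fact k)" by simp
  then have "form_norm k \<alpha> \<le> L2_set \<alpha> (basis_lists k)"
    unfolding form_norm_eq_L2_set using frac_le[of "L2_set \<alpha> (basis_lists k)" _ 1] by simp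
  also have "\<dots> \<le> (\<Sum>bs\<in>basis_lists k. \<bar>\<alpha> bs\<bar>)"
    by (rule L2_set_le_sum_abs)
  finally show ?thesis .
qed

lemma basis_lists_0: "basis_lists 0 = {[]}"
  by (auto simp: basis_lists_def)

lemma basis_lists_Suc:
  "basis_lists (Suc j) = (\<lambda>(bs, b). bs @ [b]) ` (basis_lists j \<times> (Basis :: 'a::euclidean_space set))"
proof
  show "basis_lists (Suc j) \<subseteq> (\<lambda>(bs, b). bs @ [b]) ` (basis_lists j \<times> Basis)"
  proof
    fix cs assume cs: "cs \<in> basis_lists (Suc j)"
    then have "cs \<noteq> []" by (auto simp: basis_lists_def)
    then have "cs = butlast cs @ [last cs]" by simp
    moreover have "butlast cs \<in> basis_lists j" "last cs \<in> Basis"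
      using cs \<open>cs \<noteq> []\<close> by (auto simp: basis_lists_def dest: in_set_butlastD)
    ultimately show "cs \<in> (\<lambda>(bs, b). bs @ [b]) ` (basis_lists j \<times> Basis)"
      by (auto intro!: image_eqI[where x="(butlast cs, last cs)"])
  qed
qed (auto simp: basis_lists_def)

lemma sum_basis_lists_Suc:
  fixes g :: "'a::euclidean_space list \<Rightarrow> 'b::comm_monoid_add"
  shows "(\<Sum>cs\<in>basis_lists (Suc j). g cs) = (\<Sum>bs\<in>basis_lists j. \<Sum>b\<in>Basis. g (bs @ [b]))"
proof -
  have "inj_on (\<lambda>(bs, b). bs @ [b]) (basis_lists j \<times> (Basis::'a::euclidean_space set))"
    by (auto simp: inj_on_def)
  then have "(\<Sum>cs\<in>basis_lists (Suc j). g cs) = (\<Sum>(bs, b)\<in>basis_lists j \<times> Basis. g (bs @ [b]))"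
    unfolding basis_lists_Suc by (simp add: sum.reindex case_prod_unfold)
  also have "\<dots> = (\<Sum>bs\<in>basis_lists j. \<Sum>b\<in>Basis. g (bs @ [b]))"
    by (simp add: sum.cartesian_product)
  finally show ?thesis .
qed

lemma kcovector_expand_slot:
  assumes "kcovector k \<alpha>" "length vs = k" "j < k"
  shows "\<alpha> vs = (\<Sum>b\<in>Basis. (vs ! j \<bullet> b) * \<alpha> (vs[j := b]))"
proof -
  have lin: "linear (\<lambda>v. \<alpha> (vs[j := v]))" using assms unfolding kcovector_def by blast
  have "\<alpha> vs = \<alpha> (vs[j := (\<Sum>b\<in>Basis. (vs ! j \<bullet> b) *\<^sub>R b)])"
    by (simp add: euclidean_representation)
  also have "\<dots> = (\<Sum>b\<in>Basis. (vs ! j \<bullet> b) * \<alpha> (vs[j := b]))"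
    using linear_sum[OF lin, of "\<lambda>b. (vs ! j \<bullet> b) *\<^sub>R b" Basis] linear_scale[OF lin] by simp
  finally show ?thesis .
qed

lemma kcovector_expand_prefix:
  assumes \<alpha>: "kcovector k \<alpha>" and ws: "length ws = k" and "j \<le> k"
  shows "\<alpha> ws = (\<Sum>bs\<in>basis_lists j. (\<Prod>i<j. ws ! i \<bullet> bs ! i) * \<alpha> (bs @ drop j ws))"
  using \<open>j \<le> k\<close>
proof (induction j)
  case 0
  then show ?case by (simp add: basis_lists_0)
next
  case (Suc j)
  have slot: "\<alpha> (bs @ drop j ws) = (\<Sum>b\<in>Basis. (ws ! j \<bullet> b) * \<alpha> ((bs @ [b]) @ drop (Suc j) ws))"
    if "bs \<in> basis_lists j" for bs
  proof -
    have bs: "length bs = j" using that by (simp add: basis_lists_def)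
    have "drop j ws = ws ! j # drop (Suc j) ws"
      using ws Suc.prems by (simp add: Cons_nth_drop_Suc)
    then have "(bs @ drop j ws)[j := b] = (bs @ [b]) @ drop (Suc j) ws" for b
      using bs by (simp add: list_update_append)
    moreover have "(bs @ drop j ws) ! j = ws ! j"
      using bs ws Suc.prems by (simp add: nth_append)
    ultimately show ?thesis
      using kcovector_expand_slot[OF \<alpha>, of "bs @ drop j ws" j] bs ws Suc.prems by simp
  qed
  have prod_snoc: "(\<Prod>i<Suc j. ws ! i \<bullet> (bs @ [b]) ! i) = (\<Prod>i<j. ws ! i \<bullet> bs ! i) * (ws ! j \<bullet> b)"
    if "bs \<in> basis_lists j" for bs b
    using that by (auto simp: basis_lists_def nth_append intro!: prod.cong)
  have "\<alpha> ws = (\<Sum>bs\<in>basis_lists j. (\<Prod>i<j. ws ! i \<bullet> bs ! i) * \<alpha> (bs @ drop j ws))"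
    using Suc by simp
  also have "\<dots> = (\<Sum>bs\<in>basis_lists j. \<Sum>b\<in>Basis.
      (\<Prod>i<Suc j. ws ! i \<bullet> (bs @ [b]) ! i) * \<alpha> ((bs @ [b]) @ drop (Suc j) ws))"
    by (intro sum.cong refl) (simp only: slot prod_snoc sum_distrib_left mult.assoc)
  also have "\<dots> = (\<Sum>bs\<in>basis_lists (Suc j). (\<Prod>i<Suc j. ws ! i \<bullet> bs ! i) * \<alpha> (bs @ drop (Suc j) ws))"
    by (rule sum_basis_lists_Suc[symmetric])
  finally show ?case .
qed

lemma kcovector_expand:
  assumes "kcovector k \<alpha>" "length ws = k"
  shows "\<alpha> ws = (\<Sum>bs\<in>basis_lists k. (\<Prod>i<k. ws ! i \<bullet> bs ! i) * \<alpha> bs)"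
  using kcovector_expand_prefix[OF assms order_refl] assms(2) by simp

lemma kcovector_map_linear:
  fixes D :: "'b::euclidean_space \<Rightarrow> 'a::euclidean_space"
  assumes \<alpha>: "kcovector k \<alpha>" and D: "linear D"
  shows "kcovector k (\<lambda>vs. \<alpha> (map D vs))"
  unfolding kcovector_def
proof (intro conjI allI impI)
  fix vs :: "'b list" and i assume "length vs = k" "i < k"
  then have "linear (\<lambda>w. \<alpha> ((map D vs)[i := w]))" using \<alpha> by (simp add: kcovector_def)
  then show "linear (\<lambda>v. \<alpha> (map D (vs[i := v])))"
    using linear_compose[OF D] by (simp add: map_update o_def)
qed (use \<alpha> in \<open>auto simp: kcovector_def\<close>)

lemma kcovector_integral:
  fixes \<beta> :: "'b \<Rightarrow> 'a::euclidean_space list \<Rightarrow> real"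
  assumes \<beta>: "\<And>v. kcovector k (\<beta> v)"
    and int: "\<And>vs. integrable M (\<lambda>v. \<beta> v vs * g v)"
  shows "kcovector k (\<lambda>vs. LINT v|M. \<beta> v vs * g v)"
  unfolding kcovector_def
proof (intro conjI allI impI)
  fix vs :: "'a list" and i assume "length vs = k" "i < k"
  then have lin: "linear (\<lambda>w. \<beta> v (vs[i := w]))" for v using \<beta> by (simp add: kcovector_def)
  show "linear (\<lambda>w. LINT v|M. \<beta> v (vs[i := w]) * g v)"
  proof (rule linearI)
    fix w1 w2
    show "(LINT v|M. \<beta> v (vs[i := w1 + w2]) * g v) =
        (LINT v|M. \<beta> v (vs[i := w1]) * g v) + (LINT v|M. \<beta> v (vs[i := w2]) * g v)"
      using int linear_add[OF lin] by (simp add: distrib_right)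
  next
    fix c :: real and w
    show "(LINT v|M. \<beta> v (vs[i := c *\<^sub>R w]) * g v) = c *\<^sub>R (LINT v|M. \<beta> v (vs[i := w]) * g v)"
      using linear_scale[OF lin] by (simp add: mult.assoc)
  qed
qed (use \<beta> in \<open>auto simp: kcovector_def\<close>)

section \<open>Integrability estimates\<close>

lemma le_add_scaled_powr:
  fixes t x p :: real
  assumes t: "t > 0" and x: "x \<ge> 0" and p: "p \<ge> 1"
  shows "x \<le> t + t powr (1 - p) * x powr p"
proof (cases "x \<le> t")
  case True
  then show ?thesis by (simp add: add_increasing2)
next
  case False
  then have x_pos: "x > 0" using t by simp
  have "t powr (1 - p) * x powr p = x * (x / t) powr (p - 1)"
    using x_pos t by (simp add: powr_diff powr_minus_divide powr_divide)
  moreover have "(x / t) powr (p - 1) \<ge> 1"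
    using False t p by (intro ge_one_powr_ge_zero) auto
  ultimately have "x \<le> t powr (1 - p) * x powr p"
    using x_pos by (metis mult.right_neutral mult_left_mono less_imp_le)
  then show ?thesis using t by simp
qed

lemma powr_absolutely_integrable_on_if_finite:
  fixes \<phi> :: "'a::euclidean_space \<Rightarrow> real"
  assumes U: "U \<in> sets lebesgue"
    and \<phi>_meas: "\<phi> \<in> borel_measurable (lebesgue_on U)"
    and finite: "set_nn_integral lebesgue U (\<lambda>x. ennreal (\<phi> x powr p)) < \<infinity>"
  shows "(\<lambda>x. \<phi> x powr p) absolutely_integrable_on U"
    and "enn2real (set_nn_integral lebesgue U (\<lambda>x. ennreal (\<phi> x powr p))) =
      integral U (\<lambda>x. \<phi> x powr p)"
proof -
  let ?P = "\<lambda>x. indicator U x *\<^sub>R \<phi> x powr p"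
  have "(\<lambda>x. \<phi> x powr p) \<in> borel_measurable (lebesgue_on U)"
    using \<phi>_meas by measurable
  moreover have "?P = (\<lambda>x. if x \<in> U then \<phi> x powr p else 0)"
    by (auto simp: indicator_def)
  ultimately have P_meas: "?P \<in> borel_measurable lebesgue"
    using borel_measurable_if[OF U, of "\<lambda>x. \<phi> x powr p"] by simp
  have nn_eq: "(\<integral>\<^sup>+x. ennreal (?P x) \<partial>lebesgue) = set_nn_integral lebesgue U (\<lambda>x. ennreal (\<phi> x powr p))"
    by (intro nn_integral_cong) (auto simp: indicator_def)
  show int: "(\<lambda>x. \<phi> x powr p) absolutely_integrable_on U"
    unfolding set_integrable_def
    by (rule integrableI_nonneg[OF P_meas]) (use nn_eq finite in \<open>auto simp: top.not_eq_extremum\<close>)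
  then have "set_nn_integral lebesgue U (\<lambda>x. ennreal (\<phi> x powr p)) = ennreal (LINT x|lebesgue. ?P x)"
    unfolding nn_eq[symmetric] set_integrable_def by (intro nn_integral_eq_integral) auto
  also have "(LINT x|lebesgue. ?P x) = integral U (\<lambda>x. \<phi> x powr p)"
    using set_lebesgue_integral_eq_integral(2)[OF int] by (simp add: set_lebesgue_integral_def)
  finally show "enn2real (set_nn_integral lebesgue U (\<lambda>x. ennreal (\<phi> x powr p))) =
      integral U (\<lambda>x. \<phi> x powr p)"
    by (simp add: integral_nonneg set_lebesgue_integral_eq_integral(1)[OF int])
qed

context
  fixes \<phi> :: "'a::euclidean_space \<Rightarrow> real" and p :: real and U K :: "'a set"
  assumes p: "p \<ge> 1" and U: "U \<in> sets lebesgue" and K: "K \<subseteq> U" "K \<in> lmeasurable"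
    and \<phi>_nonneg: "\<And>x. \<phi> x \<ge> 0" and \<phi>_meas: "\<phi> \<in> borel_measurable (lebesgue_on U)"
    and finite: "set_nn_integral lebesgue U (\<lambda>x. ennreal (\<phi> x powr p)) < \<infinity>"
begin

private lemma powr_integrable_on_K: "(\<lambda>x. \<phi> x powr p) integrable_on K"
  using set_integrable_subset[OF powr_absolutely_integrable_on_if_finite(1)[OF U \<phi>_meas finite]] K
  by (simp add: fmeasurableD set_lebesgue_integral_eq_integral(1))

private lemma integrable_on_young_bound: "(\<lambda>x. t + t powr (1 - p) * \<phi> x powr p) integrable_on K"
  using integrable_cmul[OF powr_integrable_on_K, of "t powr (1 - p)"]
  by (intro integrable_add integrable_on_const[OF K(2)]) simp

lemma absolutely_integrable_on_if_Lp: "\<phi> absolutely_integrable_on K"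
proof (rule measurable_bounded_by_integrable_imp_absolutely_integrable)
  show "\<phi> \<in> borel_measurable (lebesgue_on K)" by (rule measurable_restrict_mono[OF \<phi>_meas K(1)])
  show "norm (\<phi> x) \<le> 1 + 1 powr (1 - p) * \<phi> x powr p" for x
    using le_add_scaled_powr[of 1 "\<phi> x" p] p \<phi>_nonneg[of x] by simp
qed (use K integrable_on_young_bound[of 1] in \<open>auto simp: fmeasurableD\<close>)

lemma integral_le_scaled_Lp:
  assumes t: "t > 0"
  shows "integral K \<phi> \<le> t * measure lebesgue K + t powr (1 - p) * integral K (\<lambda>x. \<phi> x powr p)"
proof -
  have "integral K \<phi> \<le> integral K (\<lambda>x. t + t powr (1 - p) * \<phi> x powr p)"
    using absolutely_integrable_on_if_Lp integrable_on_young_bound le_add_scaled_powr[OF t \<phi>_nonneg p]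
    by (intro integral_le) (auto simp: set_lebesgue_integral_eq_integral)
  also have "\<dots> = t * measure lebesgue K + t powr (1 - p) * integral K (\<lambda>x. \<phi> x powr p)"
    using integrable_on_const[OF K(2)] integrable_cmul[OF powr_integrable_on_K, of "t powr (1 - p)"]
      integral_cmul[of K t "\<lambda>x. 1::real"] lmeasure_integral[OF K(2)]
    by (subst integral_add) simp_all
  finally show ?thesis .
qed

lemma integral_le_Lp_bound:
  "integral K \<phi> \<le> (measure lebesgue K + 1) *
    enn2real (set_nn_integral lebesgue U (\<lambda>x. ennreal (\<phi> x powr p))) powr (1 / p)"
proof -
  define I where "I = integral U (\<lambda>x. \<phi> x powr p)"
  define m where "m = measure lebesgue K"
  have I_eq: "enn2real (set_nn_integral lebesgue U (\<lambda>x. ennreal (\<phi> x powr p))) = I"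
    unfolding I_def by (rule powr_absolutely_integrable_on_if_finite(2)[OF U \<phi>_meas finite])
  have powr_le_I: "integral K (\<lambda>x. \<phi> x powr p) \<le> I"
    unfolding I_def
    using powr_absolutely_integrable_on_if_finite(1)[OF U \<phi>_meas finite] K(1)
    by (intro integral_subset_le powr_integrable_on_K) (auto simp: set_lebesgue_integral_eq_integral)
  have I_nonneg: "0 \<le> I"
    unfolding I_def using powr_absolutely_integrable_on_if_finite(1)[OF U \<phi>_meas finite]
    by (intro integral_nonneg) (auto simp: set_lebesgue_integral_eq_integral)
  have m_nonneg: "0 \<le> m" by (simp add: m_def)
  have young: "integral K \<phi> \<le> t * m + t powr (1 - p) * I" if "t > 0" for t
  proof -
    have "t powr (1 - p) * integral K (\<lambda>x. \<phi> x powr p) \<le> t powr (1 - p) * I"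
      using powr_le_I by (simp add: mult_left_mono)
    then show ?thesis using integral_le_scaled_Lp[OF that] by (simp add: m_def)
  qed
  have "integral K \<phi> \<le> (m + 1) * I powr (1 / p)"
  proof (cases "I = 0")
    case True
    have "integral K \<phi> \<le> 0 + e" if "e > 0" for e
    proof -
      have "integral K \<phi> \<le> e / (m + 1) * m"
        using young[of "e / (m + 1)"] \<open>e > 0\<close> m_nonneg True by simp
      also have "\<dots> \<le> e" using \<open>e > 0\<close> m_nonneg by (simp add: field_simps)
      finally show ?thesis by simp
    qed
    then have "integral K \<phi> \<le> 0" by (rule field_le_epsilon)
    then show ?thesis using True by simp
  next
    case False
    \<comment> \<open>the optimal choice of \<open>t\<close> is the \<open>L\<^sub>p\<close> norm\<close>
    define N where "N = I powr (1 / p)"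
    have N_pos: "N > 0" using False I_nonneg by (simp add: N_def)
    have "I = N powr p" using I_nonneg p by (simp add: N_def powr_powr)
    then have "N powr (1 - p) * I = N"
      using N_pos by (simp add: powr_add[symmetric])
    then have "integral K \<phi> \<le> N * m + N" using young[OF N_pos] by simp
    then show ?thesis by (simp add: N_def algebra_simps)
  qed
  then show ?thesis by (simp add: I_eq m_def)
qed

end

lemma integrable_if_vanishing_outside:
  fixes g :: "'a::euclidean_space \<Rightarrow> real"
  assumes g: "g absolutely_integrable_on S" and vanish: "\<And>v. v \<notin> S \<Longrightarrow> g v = 0"
  shows "integrable lebesgue g" and "(LINT v|lebesgue. g v) = integral S g"
proof -
  have g_eq: "indicator S v *\<^sub>R g v = g v" for v
    using vanish by (cases "v \<in> S") auto
  show "integrable lebesgue g"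
    using g unfolding set_integrable_def g_eq .
  have "(LINT v|lebesgue. g v) = (LINT v:S|lebesgue. g v)"
    unfolding set_lebesgue_integral_def g_eq ..
  also have "\<dots> = integral S g"
    using g by (simp add: set_lebesgue_integral_eq_integral)
  finally show "(LINT v|lebesgue. g v) = integral S g" .
qed

lemma absolutely_integrable_on_continuous_mult:
  fixes g u :: "'a::euclidean_space \<Rightarrow> real"
  assumes K: "compact K" and g: "continuous_on K g" and u: "u absolutely_integrable_on K"
  shows "(\<lambda>y. g y * u y) absolutely_integrable_on K"
proof (rule absolutely_integrable_bounded_measurable_product[OF bilinear_times _ _ _ u])
  show K_leb: "K \<in> sets lebesgue" using lmeasurable_compact[OF K] by (simp add: fmeasurableD)
  show "g \<in> borel_measurable (lebesgue_on K)"
    by (rule continuous_imp_measurable_on_sets_lebesgue[OF g K_leb])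
  show "bounded (g ` K)" by (intro compact_imp_bounded compact_continuous_image g K)
qed

lemma abs_integral_diff_le:
  fixes g1 g2 u :: "'a::euclidean_space \<Rightarrow> real"
  assumes g: "(\<lambda>y. g1 y * u y) integrable_on K" "(\<lambda>y. g2 y * u y) integrable_on K"
    and u: "u absolutely_integrable_on K"
    and close: "\<And>y. y \<in> K \<Longrightarrow> \<bar>g1 y - g2 y\<bar> \<le> e"
  shows "\<bar>integral K (\<lambda>y. g1 y * u y) - integral K (\<lambda>y. g2 y * u y)\<bar> \<le> e * integral K (\<lambda>y. \<bar>u y\<bar>)"
proof -
  have abs_u: "(\<lambda>y. \<bar>u y\<bar>) integrable_on K"
    using u by (simp add: absolutely_integrable_on_def)
  have "\<bar>integral K (\<lambda>y. g1 y * u y) - integral K (\<lambda>y. g2 y * u y)\<bar>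
      = norm (integral K (\<lambda>y. g1 y * u y - g2 y * u y))"
    using g by (simp add: integral_diff)
  also have "\<dots> \<le> integral K (\<lambda>y. e * \<bar>u y\<bar>)"
  proof (rule integral_norm_bound_integral)
    show "(\<lambda>y. g1 y * u y - g2 y * u y) integrable_on K" using g by (rule integrable_diff)
    show "(\<lambda>y. e * \<bar>u y\<bar>) integrable_on K" using integrable_cmul[OF abs_u, of e] by simp
    show "norm (g1 y * u y - g2 y * u y) \<le> e * \<bar>u y\<bar>" if "y \<in> K" for y
      using close[OF that] by (simp add: abs_mult mult_right_mono flip: left_diff_distrib)
  qed
  also have "\<dots> = e * integral K (\<lambda>y. \<bar>u y\<bar>)" by simp
  finally show ?thesis .
qed

lemma continuous_on_integral_kernel:
  fixes kern :: "'a::metric_space \<Rightarrow> 'b::euclidean_space \<Rightarrow> real" and u :: "'b \<Rightarrow> real"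
  assumes F: "compact F" and K: "compact K"
    and kern: "continuous_on (F \<times> K) (\<lambda>(x, y). kern x y)"
    and u: "u absolutely_integrable_on K"
  shows "continuous_on F (\<lambda>x. integral K (\<lambda>y. kern x y * u y))"
  unfolding continuous_on_iff
proof (intro ballI allI impI)
  fix x e assume x: "x \<in> F" and e: "(0::real) < e"
  have kern_x: "continuous_on K (kern x)" if "x \<in> F" for x
  proof -
    have "continuous_on K (\<lambda>y. (\<lambda>(x, y). kern x y) (x, y))"
      by (rule continuous_on_compose2[OF kern]) (use that in \<open>auto intro: continuous_intros\<close>)
    then show ?thesis by simp
  qed
  have int: "(\<lambda>y. kern x y * u y) integrable_on K" if "x \<in> F" for x
    using absolutely_integrable_on_continuous_mult[OF K kern_x[OF that] u]
    by (simp add: set_lebesgue_integral_eq_integral)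
  have abs_u: "(\<lambda>y. \<bar>u y\<bar>) integrable_on K"
    using u by (simp add: absolutely_integrable_on_def)
  define N where "N = integral K (\<lambda>y. \<bar>u y\<bar>)"
  have "N \<ge> 0" unfolding N_def by (rule integral_nonneg[OF abs_u]) simp
  define e' where "e' = e / (N + 1)"
  have "e' > 0" using e \<open>N \<ge> 0\<close> by (simp add: e'_def)
  then obtain d where "d > 0" and d: "\<And>q q'. q \<in> F \<times> K \<Longrightarrow> q' \<in> F \<times> K \<Longrightarrow> dist q' q < d \<Longrightarrow>
      dist ((\<lambda>(x, y). kern x y) q') ((\<lambda>(x, y). kern x y) q) < e'"
    using compact_uniformly_continuous[OF kern compact_Times[OF F K]]
    unfolding uniformly_continuous_on_def by metis
  have "dist (integral K (\<lambda>y. kern x' y * u y)) (integral K (\<lambda>y. kern x y * u y)) < e"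
    if x': "x' \<in> F" "dist x' x < d" for x'
  proof -
    have "\<bar>kern x' y - kern x y\<bar> \<le> e'" if "y \<in> K" for y
      using d[of "(x, y)" "(x', y)"] x x' that by (simp add: dist_Pair_Pair dist_real_def)
    then have "dist (integral K (\<lambda>y. kern x' y * u y)) (integral K (\<lambda>y. kern x y * u y)) \<le> e' * N"
      unfolding N_def dist_real_def using int x x'(1) u by (intro abs_integral_diff_le) auto
    also have "\<dots> < e" using e \<open>N \<ge> 0\<close> by (simp add: e'_def field_simps)
    finally show ?thesis .
  qed
  then show "\<exists>d>0. \<forall>x'\<in>F. dist x' x < d \<longrightarrow>
      dist (integral K (\<lambda>y. kern x' y * u y)) (integral K (\<lambda>y. kern x y * u y)) < e"
    using \<open>d > 0\<close> by blast
qed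

section \<open>The smoothing operator on the unit ball\<close>

locale ball_smoothing =
  fixes h :: "'a::euclidean_space \<Rightarrow> 'a" and f :: "'a \<Rightarrow> real" and \<epsilon> :: real
  assumes h_bij: "bij_betw h UNIV (ball 0 1)"
    and h_smooth: "smooth_on UNIV h"
    and h_inv_smooth: "smooth_on (ball 0 1) (inv h)"
    and f_cont: "continuous_on UNIV f"
    and f_zero: "\<And>v. v \<notin> cball 0 1 \<Longrightarrow> f v = 0"
    and eps: "\<epsilon> > 0"
begin

abbreviation Dh :: "'a \<Rightarrow> 'a \<Rightarrow> 'a" where
  "Dh z \<equiv> frechet_derivative h (at z)"

abbreviation Dinv :: "'a \<Rightarrow> 'a \<Rightarrow> 'a" where
  "Dinv y \<equiv> frechet_derivative (inv h) (at y)"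

lemma h_in_ball: "h z \<in> ball 0 1"
  using h_bij by (auto dest: bij_betwE)

lemma inv_h_h [simp]: "inv h (h z) = z"
  using bij_betw_imp_inj_on[OF h_bij] by (simp add: inv_f_f)

lemma h_inv_h: "y \<in> ball 0 1 \<Longrightarrow> h (inv h y) = y"
  using bij_betw_inv_into_right[OF h_bij] by simp

lemma inj_on_inv_h: "inj_on (inv h) (ball 0 1)"
  by (metis h_inv_h inj_on_def)

lemma continuous_on_inv_h: "continuous_on (ball 0 1) (inv h)"
  by (rule smooth_on_imp_continuous_on[OF h_inv_smooth])

lemma Dh_has_derivative: "(h has_derivative Dh z) (at z)"
  using smooth_on_has_derivative[OF h_smooth] by simp

lemma Dinv_has_derivative: "y \<in> ball 0 1 \<Longrightarrow> (inv h has_derivative Dinv y) (at y)"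
  by (rule smooth_on_has_derivative[OF h_inv_smooth])

lemma continuous_on_Dh_compose:
  "continuous_on S a \<Longrightarrow> continuous_on S c \<Longrightarrow> continuous_on S (\<lambda>q. Dh (a q) (c q))"
  using continuous_on_frechet_derivative_compose[OF h_smooth] by blast

lemma continuous_on_Dinv_compose:
  "continuous_on S a \<Longrightarrow> a ` S \<subseteq> ball 0 1 \<Longrightarrow> continuous_on S c \<Longrightarrow>
    continuous_on S (\<lambda>q. Dinv (a q) (c q))"
  by (rule continuous_on_frechet_derivative_compose[OF h_inv_smooth])

definition shifted :: "'a \<Rightarrow> 'a \<Rightarrow> 'a" where
  "shifted x v = h (inv h x + \<epsilon> *\<^sub>R v)"

definition shifted_deriv :: "'a \<Rightarrow> 'a \<Rightarrow> 'a \<Rightarrow> 'a" where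
  "shifted_deriv x v u = Dh (inv h x + \<epsilon> *\<^sub>R v) (Dinv x u)"

definition shift_param :: "'a \<Rightarrow> 'a \<Rightarrow> 'a" where
  "shift_param x y = (1 / \<epsilon>) *\<^sub>R (inv h y - inv h x)"

definition param_jacobian :: "'a \<Rightarrow> real" where
  "param_jacobian y = jacobian_det (\<lambda>w. (1 / \<epsilon>) *\<^sub>R Dinv y w)"

lemma shifted_in_ball: "shifted x v \<in> ball 0 1"
  unfolding shifted_def by (rule h_in_ball)

lemma shifted_shift_param: "y \<in> ball 0 1 \<Longrightarrow> shifted x (shift_param x y) = y"
  using eps by (simp add: shifted_def shift_param_def h_inv_h)

lemma shift_param_shifted: "shift_param x (shifted x v) = v"
  using eps by (simp add: shifted_def shift_param_def)

lemma linear_shifted_deriv: "x \<in> ball 0 1 \<Longrightarrow> linear (shifted_deriv x v)"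
  using linear_compose[OF has_derivative_linear[OF Dinv_has_derivative]
      has_derivative_linear[OF Dh_has_derivative]]
  by (simp add: shifted_deriv_def[abs_def] o_def)

lemma has_derivative_sfrak:
  assumes x: "x \<in> ball 0 1"
  shows "(sfrak h w has_derivative (\<lambda>u. Dh (inv h x + w) (Dinv x u))) (at x)"
proof -
  have "((\<lambda>y. inv h y + w) has_derivative (\<lambda>u. Dinv x u + 0)) (at x)"
    by (intro derivative_intros Dinv_has_derivative[OF x])
  then have "((\<lambda>y. h (inv h y + w)) has_derivative (\<lambda>u. Dh (inv h x + w) (Dinv x u))) (at x)"
    using diff_chain_at[of _ "Dinv x" x h "Dh (inv h x + w)"] Dh_has_derivative by (simp add: o_def)
  then show ?thesis
    by (rule has_derivative_transform_within_open[OF _ open_ball x]) (simp add: sfrak_def)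
qed

lemma pullback_sfrak:
  "x \<in> ball 0 1 \<Longrightarrow>
    pullback (sfrak h (\<epsilon> *\<^sub>R v)) \<omega> x vs = \<omega> (shifted x v) (map (shifted_deriv x v) vs)"
  using frechet_derivative_at[OF has_derivative_sfrak]
  by (simp add: pullback_def sfrak_def shifted_def shifted_deriv_def[abs_def])

lemma continuous_on_param_jacobian: "continuous_on (ball 0 1) param_jacobian"
  unfolding param_jacobian_def[abs_def]
  by (intro continuous_on_jacobian_det continuous_intros continuous_on_Dinv_compose) auto

theorem shifted_change_of_variables:
  fixes C u :: "'a \<Rightarrow> real"
  assumes K: "compact K" "K \<subseteq> ball 0 1"
    and shifted_K: "\<And>v. v \<in> cball 0 1 \<Longrightarrow> shifted x v \<in> K"
    and C: "continuous_on UNIV C" and u: "u absolutely_integrable_on K"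
  shows "integrable lebesgue (\<lambda>v. C v * u (shifted x v) * f v)"
    and "(LINT v|lebesgue. C v * u (shifted x v) * f v) =
      integral K (\<lambda>y. param_jacobian y * C (shift_param x y) * f (shift_param x y) * u y)"
proof -
  let ?\<psi> = "shift_param x"
  define G where "G v = C v * u (shifted x v) * f v" for v
  define W where "W y = param_jacobian y * C (?\<psi> y) * f (?\<psi> y)" for y
  have K_leb: "K \<in> sets lebesgue" using lmeasurable_compact[OF K(1)] by (simp add: fmeasurableD)
  have der: "(?\<psi> has_derivative (\<lambda>w. (1 / \<epsilon>) *\<^sub>R Dinv y w)) (at y within K)" if "y \<in> K" for y
  proof -
    have "(?\<psi> has_derivative (\<lambda>w. (1 / \<epsilon>) *\<^sub>R (Dinv y w - 0))) (at y)"
      unfolding shift_param_def using that K(2)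
      by (intro derivative_intros Dinv_has_derivative) auto
    then show ?thesis by (simp add: has_derivative_at_withinI)
  qed
  have inj: "inj_on ?\<psi> K"
    using eps inj_on_inv_h K(2) by (auto simp: shift_param_def inj_on_def)
  have \<psi>_cont: "continuous_on K ?\<psi>"
    unfolding shift_param_def by (intro continuous_intros continuous_on_subset[OF continuous_on_inv_h K(2)])
  have "continuous_on K W"
    unfolding W_def
    by (intro continuous_intros continuous_on_subset[OF continuous_on_param_jacobian K(2)]
        continuous_on_compose2[OF C \<psi>_cont] continuous_on_compose2[OF f_cont \<psi>_cont]) auto
  then have Wu_int: "(\<lambda>y. W y * u y) absolutely_integrable_on K"
    by (rule absolutely_integrable_on_continuous_mult[OF K(1) _ u])
  have jac_G: "param_jacobian y * G (?\<psi> y) = W y * u y" if "y \<in> K" for y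
    using that K(2) by (simp add: G_def W_def shifted_shift_param subset_iff)
  have G_int: "G absolutely_integrable_on ?\<psi> ` K"
    and G_integral: "integral (?\<psi> ` K) G = integral K (\<lambda>y. W y * u y)"
    using has_absolute_integral_change_of_variables_euclidean[OF K_leb der inj, of G]
      Wu_int jac_G set_integrable_cong[OF refl refl] integral_cong[of K]
    unfolding param_jacobian_def[symmetric] by (metis (no_types, lifting))+
  have "G v = 0" if "v \<notin> ?\<psi> ` K" for v
  proof -
    have "v \<notin> cball 0 1"
      using that shifted_K shift_param_shifted[of x v] by force
    then show ?thesis by (simp add: G_def f_zero)
  qed
  with G_int have "integrable lebesgue G" "(LINT v|lebesgue. G v) = integral K (\<lambda>y. W y * u y)"
    using integrable_if_vanishing_outside G_integral by metis+
  then show "integrable lebesgue (\<lambda>v. C v * u (shifted x v) * f v)"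
    and "(LINT v|lebesgue. C v * u (shifted x v) * f v) =
      integral K (\<lambda>y. param_jacobian y * C (?\<psi> y) * f (?\<psi> y) * u y)"
    by (simp_all add: G_def[abs_def] W_def)
qed


definition kernel :: "nat \<Rightarrow> 'a list \<Rightarrow> 'a list \<Rightarrow> 'a \<Rightarrow> 'a \<Rightarrow> real" where
  "kernel k vs bs x y = param_jacobian y *
    (\<Prod>i<k. Dh (inv h y) (Dinv x (vs ! i)) \<bullet> bs ! i) * f (shift_param x y)"

lemma continuous_on_kernel:
  assumes F: "F \<subseteq> ball 0 1" and K: "K \<subseteq> ball 0 1"
  shows "continuous_on (F \<times> K) (\<lambda>(x, y). kernel k vs bs x y)"
proof -
  have inv_fst: "continuous_on (F \<times> K) (\<lambda>q. inv h (fst q))"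
    and inv_snd: "continuous_on (F \<times> K) (\<lambda>q. inv h (snd q))"
    using F K by (auto intro!: continuous_on_compose2[OF continuous_on_inv_h] continuous_intros)
  have jac: "continuous_on (F \<times> K) (\<lambda>q. param_jacobian (snd q))"
    using K by (auto intro!: continuous_on_compose2[OF continuous_on_param_jacobian] continuous_intros)
  have D: "continuous_on (F \<times> K) (\<lambda>q. Dh (inv h (snd q)) (Dinv (fst q) (vs ! i)))" for i
    using F by (intro continuous_on_Dh_compose continuous_on_Dinv_compose inv_snd continuous_intros) auto
  have "continuous_on (F \<times> K) (\<lambda>q. f (shift_param (fst q) (snd q)))"
    unfolding shift_param_def
    by (intro continuous_on_compose2[OF f_cont] continuous_intros inv_fst inv_snd) auto
  then show ?thesis
    unfolding kernel_def case_prod_beta' by (intro continuous_intros jac D)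
qed

lemma pullback_sfrak_expand:
  assumes x: "x \<in> ball 0 1" and \<omega>: "is_kform_on (ball 0 1) k \<omega>" and vs: "length vs = k"
  shows "pullback (sfrak h (\<epsilon> *\<^sub>R v)) \<omega> x vs =
    (\<Sum>bs\<in>basis_lists k. (\<Prod>i<k. shifted_deriv x v (vs ! i) \<bullet> bs ! i) * \<omega> (shifted x v) bs)"
  using kcovector_expand[of k "\<omega> (shifted x v)" "map (shifted_deriv x v) vs"] \<omega> vs shifted_in_ball
  by (simp add: pullback_sfrak[OF x] is_kform_on_def)

context
  fixes x :: 'a and \<omega> :: "'a \<Rightarrow> 'a list \<Rightarrow> real" and k :: nat and K :: "'a set"
  assumes x: "x \<in> ball 0 1" and \<omega>: "is_kform_on (ball 0 1) k \<omega>"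
    and K: "compact K" "K \<subseteq> ball 0 1"
    and shifted_K: "\<And>v. v \<in> cball 0 1 \<Longrightarrow> shifted x v \<in> K"
    and coeff: "\<And>bs. bs \<in> basis_lists k \<Longrightarrow> (\<lambda>y. \<omega> y bs) absolutely_integrable_on K"
begin

lemma R_eps_eq_sum_kernel:
  assumes vs: "length vs = k"
  shows "integrable lebesgue (\<lambda>v. pullback (sfrak h (\<epsilon> *\<^sub>R v)) \<omega> x vs * f v)"
    and "R_eps h f \<epsilon> \<omega> x vs = (\<Sum>bs\<in>basis_lists k. integral K (\<lambda>y. kernel k vs bs x y * \<omega> y bs))"
proof -
  define C where "C bs v = (\<Prod>i<k. shifted_deriv x v (vs ! i) \<bullet> bs ! i)" for bs v
  have "continuous_on UNIV (C bs)" for bs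
    unfolding C_def[abs_def] shifted_deriv_def
    by (intro continuous_intros continuous_on_Dh_compose)
  note cv = shifted_change_of_variables[OF K shifted_K this coeff]
  have expand: "pullback (sfrak h (\<epsilon> *\<^sub>R v)) \<omega> x vs * f v =
      (\<Sum>bs\<in>basis_lists k. C bs v * \<omega> (shifted x v) bs * f v)" for v
    using pullback_sfrak_expand[OF x \<omega> vs] by (simp add: C_def sum_distrib_right)
  have kernel_eq: "param_jacobian y * C bs (shift_param x y) * f (shift_param x y) * \<omega> y bs =
      kernel k vs bs x y * \<omega> y bs" for y bs
    using eps by (simp add: C_def kernel_def shifted_deriv_def shift_param_def)
  show "integrable lebesgue (\<lambda>v. pullback (sfrak h (\<epsilon> *\<^sub>R v)) \<omega> x vs * f v)"
    unfolding expand using cv(1) by (intro Bochner_Integration.integrable_sum)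
  show "R_eps h f \<epsilon> \<omega> x vs = (\<Sum>bs\<in>basis_lists k. integral K (\<lambda>y. kernel k vs bs x y * \<omega> y bs))"
    unfolding R_eps_def expand using cv by (simp add: Bochner_Integration.integral_sum kernel_eq)
qed

lemma integrable_pullback_sfrak:
  "integrable lebesgue (\<lambda>v. pullback (sfrak h (\<epsilon> *\<^sub>R v)) \<omega> x vs * f v)"
proof (cases "length vs = k")
  case True
  then show ?thesis by (rule R_eps_eq_sum_kernel(1))
next
  case False
  then have "pullback (sfrak h (\<epsilon> *\<^sub>R v)) \<omega> x vs = 0" for v
    using \<omega> shifted_in_ball by (simp add: pullback_sfrak[OF x] is_kform_on_def kcovector_def)
  then show ?thesis by simp
qed

lemma kcovector_R_eps: "kcovector k (R_eps h f \<epsilon> \<omega> x)"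
proof -
  have "R_eps h f \<epsilon> \<omega> x = (\<lambda>vs. LINT v|lebesgue. \<omega> (shifted x v) (map (shifted_deriv x v) vs) * f v)"
    by (simp add: fun_eq_iff R_eps_def pullback_sfrak[OF x])
  moreover have "kcovector k (\<lambda>vs. LINT v|lebesgue. \<omega> (shifted x v) (map (shifted_deriv x v) vs) * f v)"
    using integrable_pullback_sfrak \<omega> shifted_in_ball
    by (intro kcovector_integral kcovector_map_linear linear_shifted_deriv[OF x])
      (auto simp: pullback_sfrak[OF x] is_kform_on_def)
  ultimately show ?thesis by simp
qed

end


definition shifted_image :: "'a set \<Rightarrow> 'a set" where
  "shifted_image F = (\<lambda>(x, v). shifted x v) ` (F \<times> cball 0 1)"

lemma shifted_image_subset_ball: "shifted_image F \<subseteq> ball 0 1"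
  using shifted_in_ball by (auto simp: shifted_image_def)

lemma shifted_in_shifted_image: "x \<in> F \<Longrightarrow> v \<in> cball 0 1 \<Longrightarrow> shifted x v \<in> shifted_image F"
  by (force simp: shifted_image_def)

context
  fixes F :: "'a set"
  assumes F: "compact F" "F \<subseteq> ball 0 1"
begin

lemma compact_shifted_image: "compact (shifted_image F)"
proof -
  have "continuous_on (F \<times> cball 0 1) (\<lambda>q. inv h (fst q) + \<epsilon> *\<^sub>R snd q)"
    using F(2) by (auto intro!: continuous_intros continuous_on_compose2[OF continuous_on_inv_h])
  then have "continuous_on (F \<times> cball 0 1) (\<lambda>(x, v). shifted x v)"
    unfolding shifted_def case_prod_beta'
    by (rule continuous_on_compose2[OF smooth_on_imp_continuous_on[OF h_smooth]]) auto
  then show ?thesis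
    unfolding shifted_image_def by (intro compact_continuous_image compact_Times F(1) compact_cball)
qed

lemma kernel_bounded:
  "\<exists>B\<ge>0. \<forall>vs\<in>basis_lists k. \<forall>bs\<in>basis_lists k. \<forall>x\<in>F. \<forall>y\<in>shifted_image F. \<bar>kernel k vs bs x y\<bar> \<le> B"
proof -
  have "bounded ((\<lambda>(x, y). kernel k vs bs x y) ` (F \<times> shifted_image F))" for vs bs
    by (intro compact_imp_bounded compact_continuous_image continuous_on_kernel F(2)
        shifted_image_subset_ball compact_Times F(1) compact_shifted_image)
  then have "bounded (\<Union>(vs, bs)\<in>basis_lists k \<times> basis_lists k.
      (\<lambda>(x, y). kernel k vs bs x y) ` (F \<times> shifted_image F))"
    by (intro bounded_UN) (auto simp: finite_basis_lists)
  then obtain B where "B > 0" and B: "\<forall>z\<in>\<Union>(vs, bs)\<in>basis_lists k \<times> basis_lists k.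
      (\<lambda>(x, y). kernel k vs bs x y) ` (F \<times> shifted_image F). norm z \<le> B"
    unfolding bounded_pos by blast
  have "\<forall>vs\<in>basis_lists k. \<forall>bs\<in>basis_lists k. \<forall>x\<in>F. \<forall>y\<in>shifted_image F. \<bar>kernel k vs bs x y\<bar> \<le> B"
    using B by (fastforce simp: real_norm_def)
  with \<open>B > 0\<close> show ?thesis by (intro exI[of _ B]) simp
qed

context
  fixes \<omega> :: "'a \<Rightarrow> 'a list \<Rightarrow> real" and k :: nat
  assumes \<omega>: "is_kform_on (ball 0 1) k \<omega>"
    and coeff: "\<And>bs. bs \<in> basis_lists k \<Longrightarrow> (\<lambda>y. \<omega> y bs) absolutely_integrable_on shifted_image F"
begin

lemma mem_F_imp_in_ball_and_shifted_image:
  assumes "x \<in> F"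
  shows "x \<in> ball 0 1" "\<And>v. v \<in> cball 0 1 \<Longrightarrow> shifted x v \<in> shifted_image F"
  using assms F(2) shifted_in_shifted_image by auto

lemma integrable_pullback_sfrak_on:
  "x \<in> F \<Longrightarrow> integrable lebesgue (\<lambda>v. pullback (sfrak h (\<epsilon> *\<^sub>R v)) \<omega> x vs * f v)"
  by (rule integrable_pullback_sfrak[OF mem_F_imp_in_ball_and_shifted_image(1) \<omega> compact_shifted_image
      shifted_image_subset_ball mem_F_imp_in_ball_and_shifted_image(2) coeff])

lemma R_eps_eq_sum_kernel_on:
  "x \<in> F \<Longrightarrow> length vs = k \<Longrightarrow> R_eps h f \<epsilon> \<omega> x vs =
    (\<Sum>bs\<in>basis_lists k. integral (shifted_image F) (\<lambda>y. kernel k vs bs x y * \<omega> y bs))"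
  by (rule R_eps_eq_sum_kernel(2)[OF mem_F_imp_in_ball_and_shifted_image(1) \<omega> compact_shifted_image
      shifted_image_subset_ball mem_F_imp_in_ball_and_shifted_image(2) coeff])

lemma kcovector_R_eps_on: "x \<in> F \<Longrightarrow> kcovector k (R_eps h f \<epsilon> \<omega> x)"
  by (rule kcovector_R_eps[OF mem_F_imp_in_ball_and_shifted_image(1) \<omega> compact_shifted_image
      shifted_image_subset_ball mem_F_imp_in_ball_and_shifted_image(2) coeff])

lemma continuous_on_R_eps: "continuous_on F (\<lambda>x. R_eps h f \<epsilon> \<omega> x vs)"
proof (cases "length vs = k")
  case True
  have "continuous_on F (\<lambda>x. \<Sum>bs\<in>basis_lists k. integral (shifted_image F) (\<lambda>y. kernel k vs bs x y * \<omega> y bs))"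
    by (intro continuous_on_sum continuous_on_integral_kernel F(1) compact_shifted_image
        continuous_on_kernel F(2) shifted_image_subset_ball coeff)
  then show ?thesis
    using R_eps_eq_sum_kernel_on True by (auto intro: continuous_on_cong[THEN iffD1])
next
  case False
  have "R_eps h f \<epsilon> \<omega> x vs = 0" if "x \<in> F" for x
    using kcovector_R_eps_on[OF that] False by (auto simp: kcovector_def)
  then show ?thesis
    using continuous_on_cong[of F F "\<lambda>x. R_eps h f \<epsilon> \<omega> x vs" "\<lambda>x. 0"] by auto
qed

lemma abs_integral_kernel_le:
  fixes B :: real
  assumes bs: "bs \<in> basis_lists k" and x: "x \<in> F"
    and B: "\<And>y. y \<in> shifted_image F \<Longrightarrow> \<bar>kernel k vs bs x y\<bar> \<le> B"
    and norm_int: "(\<lambda>y. form_norm k (\<omega> y)) absolutely_integrable_on shifted_image F"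
  shows "\<bar>integral (shifted_image F) (\<lambda>y. kernel k vs bs x y * \<omega> y bs)\<bar> \<le>
    B * sqrt (fact k) * integral (shifted_image F) (\<lambda>y. form_norm k (\<omega> y))"
proof -
  let ?K = "shifted_image F"
  have "continuous_on ?K (\<lambda>y. (\<lambda>(x, y). kernel k vs bs x y) (x, y))"
    by (rule continuous_on_compose2[OF continuous_on_kernel[OF F(2) shifted_image_subset_ball]])
      (use x in \<open>auto intro: continuous_intros\<close>)
  then have "(\<lambda>y. kernel k vs bs x y * \<omega> y bs) absolutely_integrable_on ?K"
    using absolutely_integrable_on_continuous_mult[OF compact_shifted_image _ coeff[OF bs]] by simp
  moreover have "(\<lambda>y. B * sqrt (fact k) * form_norm k (\<omega> y)) integrable_on ?K"
    using integrable_cmul[OF set_lebesgue_integral_eq_integral(1)[OF norm_int], of "B * sqrt (fact k)"]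
    by simp
  ultimately have "norm (integral ?K (\<lambda>y. kernel k vs bs x y * \<omega> y bs)) \<le>
      integral ?K (\<lambda>y. B * sqrt (fact k) * form_norm k (\<omega> y))"
  proof (rule integral_norm_bound_integral[OF set_lebesgue_integral_eq_integral(1)])
    fix y assume y: "y \<in> ?K"
    have "\<bar>kernel k vs bs x y\<bar> * \<bar>\<omega> y bs\<bar> \<le> B * (sqrt (fact k) * form_norm k (\<omega> y))"
      using B[OF y] by (intro mult_mono abs_le_form_norm bs) auto
    then show "norm (kernel k vs bs x y * \<omega> y bs) \<le> B * sqrt (fact k) * form_norm k (\<omega> y)"
      by (simp add: abs_mult mult.assoc)
  qed
  then show ?thesis by simp
qed

lemma form_norm_R_eps_le:
  fixes B :: real
  assumes B: "\<And>vs bs x y. vs \<in> basis_lists k \<Longrightarrow> bs \<in> basis_lists k \<Longrightarrow> x \<in> F \<Longrightarrow>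
      y \<in> shifted_image F \<Longrightarrow> \<bar>kernel k vs bs x y\<bar> \<le> B"
    and norm_int: "(\<lambda>y. form_norm k (\<omega> y)) absolutely_integrable_on shifted_image F"
    and x: "x \<in> F"
  shows "form_norm k (R_eps h f \<epsilon> \<omega> x) \<le>
    real (card (basis_lists k :: 'a list set)) ^ 2 * B * sqrt (fact k) *
      integral (shifted_image F) (\<lambda>y. form_norm k (\<omega> y))"
proof -
  let ?K = "shifted_image F" and ?n = "card (basis_lists k :: 'a list set)"
  define \<Phi> where "\<Phi> = integral ?K (\<lambda>y. form_norm k (\<omega> y))"
  have kernel_term: "\<bar>integral ?K (\<lambda>y. kernel k vs bs x y * \<omega> y bs)\<bar> \<le> B * sqrt (fact k) * \<Phi>"
    if "vs \<in> basis_lists k" "bs \<in> basis_lists k" for vs bs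
    unfolding \<Phi>_def using that by (intro abs_integral_kernel_le B x norm_int)
  have coefficient: "\<bar>R_eps h f \<epsilon> \<omega> x vs\<bar> \<le> ?n * (B * sqrt (fact k) * \<Phi>)"
    if vs: "vs \<in> basis_lists k" for vs
  proof -
    have "\<bar>R_eps h f \<epsilon> \<omega> x vs\<bar> = \<bar>\<Sum>bs\<in>basis_lists k. integral ?K (\<lambda>y. kernel k vs bs x y * \<omega> y bs)\<bar>"
      using R_eps_eq_sum_kernel_on[OF x] vs by (simp add: basis_lists_def)
    also have "\<dots> \<le> (\<Sum>bs\<in>basis_lists k. \<bar>integral ?K (\<lambda>y. kernel k vs bs x y * \<omega> y bs)\<bar>)"
      by (rule sum_abs)
    also have "\<dots> \<le> ?n * (B * sqrt (fact k) * \<Phi>)"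
      by (rule sum_bounded_above) (use kernel_term vs in auto)
    finally show ?thesis .
  qed
  have "form_norm k (R_eps h f \<epsilon> \<omega> x) \<le> (\<Sum>vs\<in>basis_lists k. \<bar>R_eps h f \<epsilon> \<omega> x vs\<bar>)"
    by (rule form_norm_le_sum_abs)
  also have "\<dots> \<le> ?n * (?n * (B * sqrt (fact k) * \<Phi>))"
    by (rule sum_bounded_above) (use coefficient in auto)
  finally show ?thesis by (simp add: \<Phi>_def power2_eq_square mult_ac)
qed

end

end

end

lemma R_eps_linear_combination:
  assumes "integrable lebesgue (\<lambda>v. pullback (sfrak h (\<epsilon> *\<^sub>R v)) \<omega> x vs * f v)"
    and "integrable lebesgue (\<lambda>v. pullback (sfrak h (\<epsilon> *\<^sub>R v)) \<eta> x vs * f v)"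
  shows "R_eps h f \<epsilon> (\<lambda>y vs. a * \<omega> y vs + b * \<eta> y vs) x vs =
    a * R_eps h f \<epsilon> \<omega> x vs + b * R_eps h f \<epsilon> \<eta> x vs"
proof -
  have "pullback (sfrak h (\<epsilon> *\<^sub>R v)) (\<lambda>y vs. a * \<omega> y vs + b * \<eta> y vs) x vs * f v =
      a * (pullback (sfrak h (\<epsilon> *\<^sub>R v)) \<omega> x vs * f v) +
      b * (pullback (sfrak h (\<epsilon> *\<^sub>R v)) \<eta> x vs * f v)" for v
    by (simp add: pullback_def algebra_simps)
  then show ?thesis
    using assms by (simp add: R_eps_def)
qed

context
  fixes k :: nat and p :: real and U K :: "'a::euclidean_space set" and \<omega> :: "'a \<Rightarrow> 'a list \<Rightarrow> real"
  assumes p: "1 \<le> p" and U: "U \<in> sets lebesgue" and \<omega>: "Omega_p k p U \<omega>"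
    and K: "K \<subseteq> U" "K \<in> lmeasurable"
begin

private lemma form_norm_measurable: "(\<lambda>y. form_norm k (\<omega> y)) \<in> borel_measurable (lebesgue_on U)"
proof -
  have [measurable]: "(\<lambda>y. \<omega> y vs) \<in> borel_measurable (lebesgue_on U)" for vs
    using \<omega> by (simp add: Omega_p_def)
  show ?thesis unfolding form_norm_def by measurable
qed

private lemma Lp_pow_finite:
  "set_nn_integral lebesgue U (\<lambda>x. ennreal (form_norm k (\<omega> x) powr p)) < \<infinity>"
  using \<omega> by (simp add: Omega_p_def Lp_pow_def)

lemma Omega_p_form_norm_absolutely_integrable_on:
  "(\<lambda>y. form_norm k (\<omega> y)) absolutely_integrable_on K"
  by (rule absolutely_integrable_on_if_Lp[OF p U K form_norm_nonneg form_norm_measurable Lp_pow_finite])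

lemma Omega_p_integral_form_norm_le:
  "integral K (\<lambda>y. form_norm k (\<omega> y)) \<le> (measure lebesgue K + 1) * Lp_norm p k U \<omega>"
  using integral_le_Lp_bound[OF p U K form_norm_nonneg form_norm_measurable Lp_pow_finite]
  by (simp add: Lp_norm_def Lp_pow_def)

lemma Omega_p_coefficient_absolutely_integrable_on:
  assumes bs: "bs \<in> basis_lists k"
  shows "(\<lambda>y. \<omega> y bs) absolutely_integrable_on K"
proof (rule measurable_bounded_by_integrable_imp_absolutely_integrable)
  have "(\<lambda>y. \<omega> y bs) \<in> borel_measurable (lebesgue_on U)"
    using \<omega> by (simp add: Omega_p_def)
  then show "(\<lambda>y. \<omega> y bs) \<in> borel_measurable (lebesgue_on K)"
    by (rule measurable_restrict_mono[OF _ K(1)])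
  show "K \<in> sets lebesgue" using K(2) by (simp add: fmeasurableD)
  show "(\<lambda>y. sqrt (fact k) * form_norm k (\<omega> y)) integrable_on K"
    using integrable_cmul[OF set_lebesgue_integral_eq_integral(1)[OF
          Omega_p_form_norm_absolutely_integrable_on], of "sqrt (fact k)"]
    by simp
  show "norm (\<omega> y bs) \<le> sqrt (fact k) * form_norm k (\<omega> y)" for y
    using abs_le_form_norm[OF bs] by simp
qed

end

context ball_smoothing
begin

context
  fixes p :: real and U F :: "'a set"
  assumes p: "1 \<le> p" and U: "U \<in> sets lebesgue" "ball 0 1 \<subseteq> U"
    and F: "compact F" "F \<subseteq> ball 0 1"
begin

private lemma shifted_image_subset_U_lmeasurable: "shifted_image F \<subseteq> U" "shifted_image F \<in> lmeasurable"
  using shifted_image_subset_ball[of F] U(2) lmeasurable_compact[OF compact_shifted_image[OF F]]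
  by blast+

private lemma Omega_p_kform: "Omega_p k p U \<omega> \<Longrightarrow> is_kform_on (ball 0 1) k \<omega>"
  using U(2) unfolding Omega_p_def is_kform_on_def by blast

lemmas Omega_p_coefficient_on_shifted_image =
  Omega_p_coefficient_absolutely_integrable_on[OF p U(1) _ shifted_image_subset_U_lmeasurable]

lemma integrable_pullback_sfrak_Omega_p:
  "Omega_p k p U \<omega> \<Longrightarrow> x \<in> F \<Longrightarrow>
    integrable lebesgue (\<lambda>v. pullback (sfrak h (\<epsilon> *\<^sub>R v)) \<omega> x vs * f v)"
  by (rule integrable_pullback_sfrak_on[OF F Omega_p_kform Omega_p_coefficient_on_shifted_image])

lemma R_eps_bounded:
  "\<exists>C. \<forall>\<omega>. Omega_p k p U \<omega> \<longrightarrow> (\<forall>x\<in>F. form_norm k (R_eps h f \<epsilon> \<omega> x) \<le> C * Lp_norm p k U \<omega>)"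
proof -
  let ?K = "shifted_image F"
  obtain B where "B \<ge> 0" and B: "\<And>vs bs x y. vs \<in> basis_lists k \<Longrightarrow> bs \<in> basis_lists k \<Longrightarrow>
      x \<in> F \<Longrightarrow> y \<in> ?K \<Longrightarrow> \<bar>kernel k vs bs x y\<bar> \<le> B"
    using kernel_bounded[OF F] by blast
  let ?c = "real (card (basis_lists k :: 'a list set)) ^ 2 * B * sqrt (fact k)"
  have "form_norm k (R_eps h f \<epsilon> \<omega> x) \<le> ?c * (measure lebesgue ?K + 1) * Lp_norm p k U \<omega>"
    if \<omega>: "Omega_p k p U \<omega>" and x: "x \<in> F" for \<omega> x
  proof -
    have "form_norm k (R_eps h f \<epsilon> \<omega> x) \<le> ?c * integral ?K (\<lambda>y. form_norm k (\<omega> y))"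
      by (rule form_norm_R_eps_le[OF F Omega_p_kform[OF \<omega>] Omega_p_coefficient_on_shifted_image[OF \<omega>]
            B Omega_p_form_norm_absolutely_integrable_on[OF p U(1) \<omega> shifted_image_subset_U_lmeasurable] x])
    also have "\<dots> \<le> ?c * ((measure lebesgue ?K + 1) * Lp_norm p k U \<omega>)"
      using \<open>B \<ge> 0\<close>
      by (intro mult_left_mono Omega_p_integral_form_norm_le[OF p U(1) \<omega> shifted_image_subset_U_lmeasurable]) auto
    finally show ?thesis by (simp add: mult_ac)
  qed
  then show ?thesis by blast
qed

lemma Omega_inf_R_eps:
  assumes \<omega>: "Omega_p k p U \<omega>"
  shows "Omega_inf k F (R_eps h f \<epsilon> \<omega>)"
proof -
  note hyps = F Omega_p_kform[OF \<omega>] Omega_p_coefficient_on_shifted_image[OF \<omega>]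
  have F_leb: "F \<in> sets lebesgue" using lmeasurable_compact[OF F(1)] by (simp add: fmeasurableD)
  obtain C where "\<forall>x\<in>F. form_norm k (R_eps h f \<epsilon> \<omega> x) \<le> C * Lp_norm p k U \<omega>"
    using R_eps_bounded \<omega> by blast
  then have "AE x in lebesgue_on F. form_norm k (R_eps h f \<epsilon> \<omega> x) \<le> C * Lp_norm p k U \<omega>"
    using F_leb by (intro AE_I2) (auto simp: space_restrict_space)
  then show ?thesis
    unfolding Omega_inf_def is_kform_on_def
    using kcovector_R_eps_on[OF hyps]
      continuous_imp_measurable_on_sets_lebesgue[OF continuous_on_R_eps[OF hyps] F_leb]
    by blast
qed

end

end

theorem lemma2:
  fixes U F :: "'a::euclidean_space set"
    and f :: "'a \<Rightarrow> real" and h :: "'a \<Rightarrow> 'a"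
    and p \<epsilon> :: real and k :: nat
  assumes p: "1 \<le> p"
    and U: "open U" "cball 0 1 \<subseteq> U"
    and f_smooth: "smooth_on UNIV f"
    and f_supp: "closure {v. f v \<noteq> 0} \<subseteq> cball 0 1"
    and f_nonneg: "\<And>v. f v \<ge> 0"
    and f_even: "\<And>v. f v = f (- v)"
    and f_int: "(f has_integral 1) UNIV"
    and h_bij: "bij_betw h UNIV (ball 0 1)"
    and h_smooth: "smooth_on UNIV h"
    and h_inv_smooth: "smooth_on (ball 0 1) (inv h)"
    and eps: "\<epsilon> > 0"
    and F: "compact F" "F \<subseteq> interior (cball 0 1)"
  shows
    "(\<forall>\<omega>. Omega_p k p U \<omega> \<longrightarrow>
        (\<forall>x\<in>F. \<forall>vs. integrable lebesgue
            (\<lambda>v. pullback (sfrak h (\<epsilon> *\<^sub>R v)) \<omega> x vs * f v)) \<and>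
        Omega_inf k F (R_eps h f \<epsilon> \<omega>))
     \<and> (\<forall>\<omega> \<eta> a b. Omega_p k p U \<omega> \<longrightarrow> Omega_p k p U \<eta> \<longrightarrow>
          (\<forall>x\<in>F. R_eps h f \<epsilon> (\<lambda>y vs. a * \<omega> y vs + b * \<eta> y vs) x
                 = (\<lambda>vs. a * R_eps h f \<epsilon> \<omega> x vs + b * R_eps h f \<epsilon> \<eta> x vs)))
     \<and> (\<exists>C. \<forall>\<omega>. Omega_p k p U \<omega> \<longrightarrow>
          (AE x in lebesgue_on F. form_norm k (R_eps h f \<epsilon> \<omega> x) \<le> C * Lp_norm p k U \<omega>))"
proof -
  have "f v = 0" if "v \<notin> cball 0 1" for v
    using f_supp that closure_subset[of "{v. f v \<noteq> 0}"] by auto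
  then interpret ball_smoothing h f \<epsilon>
    using h_bij h_smooth h_inv_smooth smooth_on_imp_continuous_on[OF f_smooth] eps
    by unfold_locales
  have hyps: "1 \<le> p" "U \<in> sets lebesgue" "ball 0 1 \<subseteq> U" "compact F" "F \<subseteq> ball 0 1"
    using p U F ball_subset_cball[of 0 1] by (auto simp: borel_open)
  obtain C where "\<forall>\<omega>. Omega_p k p U \<omega> \<longrightarrow>
      (\<forall>x\<in>F. form_norm k (R_eps h f \<epsilon> \<omega> x) \<le> C * Lp_norm p k U \<omega>)"
    using R_eps_bounded[OF hyps] by blast
  then have "\<forall>\<omega>. Omega_p k p U \<omega> \<longrightarrow>
      (AE x in lebesgue_on F. form_norm k (R_eps h f \<epsilon> \<omega> x) \<le> C * Lp_norm p k U \<omega>)"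
    using lmeasurable_compact[OF F(1)]
    by (auto intro!: AE_I2 simp: space_restrict_space fmeasurableD)
  then show ?thesis
    using Omega_inf_R_eps[OF hyps] integrable_pullback_sfrak_Omega_p[OF hyps]
    by (auto intro!: R_eps_linear_combination integrable_pullback_sfrak_Omega_p[OF hyps])
qed

end
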